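(* Let $k\ge 3$ be odd and $i\in\{1,\ldots,k-1\}$ such that $\binom{k}{i}$ and $\binom{k-1}{i}$ are both odd. Then $\lambda_{k-i+1}-\lambda_{k-i-1}\equiv 2\pmod 4$.
   Context: For $0\le i\le k$ and $j=0,\ldots,k$ define $\lambda_j=\sum_{\ell=0}^{k-i}(-1)^\ell\binom{j}{\ell}\binom{k-j}{i-j+\ell}^2$, with the convention $\binom{a}{b}=0$ unless $0\le b\le a$; these are the eigenvalues of the graph $J(2k,k,i)$ on $k$-subsets of $\{1,\ldots,2k\}$ (adjacent iff intersection has size $i$). *)

theory Defs
  imports Main
begin

definition binomz :: "int \<Rightarrow> int \<Rightarrow> int" where
  "binomz a b = (if 0 \<le> b \<and> b \<le> a then int (nat a choose nat b) else 0)"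

text \<open>Eigenvalue lambda_j of J(2k,k,i).\<close>
definition jlambda :: "nat \<Rightarrow> nat \<Rightarrow> nat \<Rightarrow> int" where
  "jlambda k i j = (\<Sum>l = 0..k - i. (-1) ^ l * binomz (int j) (int l)
       * (binomz (int k - int j) (int i - int j + int l))^2)"

end

theory Submission
  imports Defs
begin

text \<open>
  Expanding the factor binom(k - j, i - j + l) by Vandermonde's identity and evaluating the
  resulting alternating sums rewrites the eigenvalue as
  lambda_x = (-1)^(k-i) sum_j (-1)^j binom(k-j, i) binom(2j, j) binom(k-x+j, 2j).
  In lambda_(k-i-1) - lambda_(k-i+1) the term j = 0 vanishes and the term j = 1 is
  -2 (2i+1) binom(k-1, i), which is 2 modulo 4. Every term with j >= 2 is divisible by 4:
  binom(2j, j) = 2 binom(2j-1, j-1) is divisible by 4 unless j is a power of two, and for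
  j = 2^r Lucas' theorem modulo 2 shows that either binom(k-j, i) is even or
  binom(i+j+1, 2j) and binom(i+j-1, 2j) have the same parity. Lucas' theorem also forces i
  to be even, since binom(k-1, i) is odd and k - 1 is even.
\<close>

subsection \<open>Binomial identities\<close>

lemma sum_triangle_swap:
  fixes g :: "nat \<Rightarrow> nat \<Rightarrow> 'a::comm_monoid_add"
  shows "(\<Sum>j\<le>d. \<Sum>l\<le>d - j. g j l) = (\<Sum>l\<le>d. \<Sum>j\<le>d - l. g j l)"
proof -
  have "{..d - j} = {l. l \<in> {..d} \<and> j + l \<le> d}" if "j \<le> d" for j
    using that by auto
  moreover have "{..d - l} = {j. j \<in> {..d} \<and> j + l \<le> d}" if "l \<le> d" for l
    using that by auto
  ultimately show ?thesis
    using sum.swap_restrict[of "{..d}" "{..d}" g "\<lambda>j l. j + l \<le> d"] by simp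
qed

lemma alternating_sum_choose_Suc:
  fixes f :: "nat \<Rightarrow> 'a::comm_ring_1"
  shows "(\<Sum>j\<le>Suc p. (-1)^j * of_nat (Suc p choose j) * f j)
       = (\<Sum>j\<le>p. (-1)^j * of_nat (p choose j) * f j) - (\<Sum>j\<le>p. (-1)^j * of_nat (p choose j) * f (Suc j))"
proof -
  have "(\<Sum>j\<le>Suc p. (-1)^j * of_nat (Suc p choose j) * f j)
      = (\<Sum>j\<le>Suc p. (-1)^j * of_nat (p choose j) * f j)
        + (\<Sum>j\<le>Suc p. if j = 0 then 0 else (-1)^j * of_nat (p choose (j - 1)) * f j)"
    by (subst sum.distrib[symmetric], rule sum.cong) (auto simp: choose_reduce_nat algebra_simps)
  also have "(\<Sum>j\<le>Suc p. (-1)^j * of_nat (p choose j) * f j) = (\<Sum>j\<le>p. (-1)^j * of_nat (p choose j) * f j)"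
    by (simp add: sum.atMost_Suc binomial_eq_0)
  also have "(\<Sum>j\<le>Suc p. if j = 0 then 0 else (-1)^j * of_nat (p choose (j - 1)) * f j)
      = - (\<Sum>j\<le>p. (-1)^j * of_nat (p choose j) * f (Suc j))"
    by (subst sum.atMost_Suc_shift) (simp add: sum_negf)
  finally show ?thesis by simp
qed

lemma alternating_sum_choose_shift:
  "(\<Sum>j\<le>p. (-1)^j * of_nat (p choose j) * of_nat ((b + j) choose c) :: 'a::comm_ring_1)
   = (if p \<le> c then (-1)^p * of_nat (b choose (c - p)) else 0)"
proof (induction p arbitrary: b)
  case 0
  then show ?case by simp
next
  case (Suc p)
  have "(\<Sum>j\<le>Suc p. (-1)^j * of_nat (Suc p choose j) * of_nat ((b + j) choose c) :: 'a)
      = (\<Sum>j\<le>p. (-1)^j * of_nat (p choose j) * of_nat ((b + j) choose c))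
        - (\<Sum>j\<le>p. (-1)^j * of_nat (p choose j) * of_nat ((Suc b + j) choose c))"
    using alternating_sum_choose_Suc[of p "\<lambda>j. of_nat ((b + j) choose c)"] by simp
  also have "\<dots> = (if p \<le> c then (-1)^p * (of_nat (b choose (c - p)) - of_nat (Suc b choose (c - p))) else 0)"
    unfolding Suc.IH by (simp add: algebra_simps)
  also have "\<dots> = (if Suc p \<le> c then (-1)^Suc p * of_nat (b choose (c - Suc p)) else 0)"
  proof (cases "p < c")
    case True
    then have "c - p = Suc (c - Suc p)" by arith
    then show ?thesis using True by (simp add: algebra_simps)
  qed auto
  finally show ?case .
qed

lemma alternating_sum_choose_diagonal:
  "(\<Sum>j\<le>p. (-1)^j * of_nat (p choose j) * of_nat ((a + j) choose j) :: 'a::comm_ring_1)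
   = (-1)^p * of_nat (a choose p)"
proof -
  have "(a + j) choose j = (a + j) choose a" for j
    using binomial_symmetric[of a "a + j"] by simp
  then show ?thesis
    using alternating_sum_choose_shift[of p a a, where 'a='a]
    by (auto simp: binomial_symmetric[symmetric] binomial_eq_0)
qed

lemma choose_mult_subset:
  "j \<le> p \<Longrightarrow> ((a - j) choose (p - j)) * (a choose j) = (a choose p) * (p choose j)"
  by (cases "p \<le> a") (use choose_mult[of j p a] in \<open>auto simp: binomial_eq_0\<close>)

lemma choose_mult_central:
  "(a choose j) * ((a + j) choose j) = ((2 * j) choose j) * ((a + j) choose (2 * j))"
proof (cases "j \<le> a")
  case True
  have "((a + j) choose (2 * j)) * ((2 * j) choose j) = ((a + j) choose j) * ((a + j - j) choose (2 * j - j))"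
    by (rule choose_mult) (use True in auto)
  then show ?thesis by (simp add: mult.commute mult_2)
qed (simp add: binomial_eq_0)

lemma choose_vandermonde_shift:
  "(a choose j) * ((a + x - j) choose (d - j))
   = (a choose j) * (\<Sum>l\<le>d - j. (x choose l) * ((a - j) choose (d - j - l)))"
proof (cases "j \<le> a")
  case True
  have "(\<Sum>l\<le>d - j. (x choose l) * ((a - j) choose (d - j - l))) = (x + (a - j)) choose (d - j)"
    by (rule vandermonde)
  with True show ?thesis by (simp add: add.commute)
qed (simp add: binomial_eq_0)

lemma alternating_sum_choose_subset:
  "(\<Sum>j\<le>p. (-1)^j * of_nat ((a - j) choose (p - j)) * of_nat (a choose j)
              * of_nat ((a + j) choose j) :: 'a::comm_ring_1)
   = (-1)^p * of_nat (a choose p)^2"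
proof -
  have "(-1)^j * of_nat ((a - j) choose (p - j)) * of_nat (a choose j) * of_nat ((a + j) choose j)
      = of_nat (a choose p) * ((-1)^j * of_nat (p choose j) * (of_nat ((a + j) choose j) :: 'a))"
    if "j \<le> p" for j
  proof -
    have "(-1)^j * of_nat ((a - j) choose (p - j)) * of_nat (a choose j) * of_nat ((a + j) choose j)
        = (-1)^j * of_nat (((a - j) choose (p - j)) * (a choose j)) * (of_nat ((a + j) choose j) :: 'a)"
      by (simp add: mult.assoc)
    also have "\<dots> = (-1)^j * of_nat ((a choose p) * (p choose j)) * of_nat ((a + j) choose j)"
      by (simp only: choose_mult_subset[OF that])
    finally show ?thesis
      by (simp add: algebra_simps)
  qed
  then have "(\<Sum>j\<le>p. (-1)^j * of_nat ((a - j) choose (p - j)) * of_nat (a choose j)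
              * of_nat ((a + j) choose j) :: 'a)
      = of_nat (a choose p) * (\<Sum>j\<le>p. (-1)^j * of_nat (p choose j) * of_nat ((a + j) choose j))"
    unfolding sum_distrib_left by (intro sum.cong) simp_all
  then show ?thesis
    unfolding alternating_sum_choose_diagonal by (simp add: power2_eq_square)
qed

lemma alternating_sum_choose_square:
  "(\<Sum>l\<le>d. (-1)^l * of_nat (x choose l) * of_nat (a choose (d - l))^2 :: 'a::comm_ring_1)
   = (-1)^d * (\<Sum>j\<le>d. (-1)^j * of_nat ((a + x - j) choose (d - j)) * of_nat (a choose j)
                          * of_nat ((a + j) choose j))"
proof -
  define t :: "nat \<Rightarrow> nat \<Rightarrow> 'a" where "t j l = of_nat (x choose l) * ((-1)^j
      * of_nat ((a - j) choose (d - l - j)) * of_nat (a choose j) * of_nat ((a + j) choose j))" for j l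
  have "(-1)^j * of_nat ((a + x - j) choose (d - j)) * of_nat (a choose j) * of_nat ((a + j) choose j)
      = (\<Sum>l\<le>d - j. t j l)" for j
  proof -
    have "(-1)^j * of_nat ((a + x - j) choose (d - j)) * of_nat (a choose j) * of_nat ((a + j) choose j)
        = (-1)^j * of_nat ((a choose j) * ((a + x - j) choose (d - j))) * (of_nat ((a + j) choose j) :: 'a)"
      by (simp add: algebra_simps)
    also have "\<dots> = (-1)^j * of_nat ((a choose j)
        * (\<Sum>l\<le>d - j. (x choose l) * ((a - j) choose (d - j - l)))) * of_nat ((a + j) choose j)"
      by (simp only: choose_vandermonde_shift)
    finally show ?thesis
      by (simp add: t_def sum_distrib_left sum_distrib_right algebra_simps)
  qed
  then have "(\<Sum>j\<le>d. (-1)^j * of_nat ((a + x - j) choose (d - j)) * of_nat (a choose j)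
                * of_nat ((a + j) choose j)) = (\<Sum>j\<le>d. \<Sum>l\<le>d - j. t j l)"
    by simp
  also have "\<dots> = (\<Sum>l\<le>d. \<Sum>j\<le>d - l. t j l)"
    by (rule sum_triangle_swap)
  also have "\<dots> = (\<Sum>l\<le>d. of_nat (x choose l) * ((-1)^(d - l) * of_nat (a choose (d - l))^2))"
    by (simp only: t_def alternating_sum_choose_subset flip: sum_distrib_left)
  also have "\<dots> = (-1)^d * (\<Sum>l\<le>d. (-1)^l * of_nat (x choose l) * of_nat (a choose (d - l))^2)"
  proof -
    have "(-1::'a)^(d - l) = (-1)^d * (-1)^l" if "l \<le> d" for l
      using that by (auto simp: minus_one_power_iff)
    then show ?thesis
      by (simp add: sum_distrib_left algebra_simps)
  qed
  finally show ?thesis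
    by (simp add: mult.assoc[symmetric] flip: power_add)
qed

subsection \<open>Binomial coefficients modulo 2\<close>

lemma odd_choose_double_iff:
  "odd ((2 * a) choose r) \<longleftrightarrow> even r \<and> odd (a choose (r div 2))"
proof (induction a arbitrary: r)
  case 0
  have "(0::nat) choose k = (if k = 0 then 1 else 0)" for k
    by (cases k) auto
  then show ?case by simp presburger
next
  case (Suc a)
  show ?case
  proof (cases r)
    case (Suc r1)
    show ?thesis
    proof (cases r1)
      case (Suc r2)
      have "(2 * Suc a) choose r = ((2 * a) choose r) + 2 * ((2 * a) choose Suc r2) + ((2 * a) choose r2)"
        using \<open>r = Suc r1\<close> Suc by (simp add: numeral_2_eq_2)
      moreover have "r div 2 = Suc (r2 div 2)"
        using \<open>r = Suc r1\<close> Suc by simp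
      ultimately show ?thesis
        using Suc.IH[of r] Suc.IH[of r2] \<open>r = Suc r1\<close> Suc by auto
    qed (use \<open>r = Suc r1\<close> in simp)
  qed simp
qed

text \<open>Lucas' theorem modulo 2, one binary digit at a time.\<close>

lemma odd_choose_iff:
  "odd (n choose r) \<longleftrightarrow> odd ((n div 2) choose (r div 2)) \<and> (odd r \<longrightarrow> odd n)"
proof (cases "even n")
  case True
  then obtain a where "n = 2 * a" by blast
  then show ?thesis using odd_choose_double_iff[of a r] by auto
next
  case False
  then obtain a where n: "n = Suc (2 * a)" by (metis oddE Suc_eq_plus1)
  show ?thesis
  proof (cases r)
    case (Suc r0)
    then have "n choose r = ((2 * a) choose r) + ((2 * a) choose r0)" using n by simp
    then show ?thesis using odd_choose_double_iff[of a r] odd_choose_double_iff[of a r0] n Suc by auto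
  qed (use n in simp)
qed

lemma odd_if_odd_choose:
  "odd (n choose r) \<Longrightarrow> odd r \<Longrightarrow> odd n"
  using odd_choose_iff by blast

lemma odd_choose_power_of_two_iff:
  "odd (n choose 2 ^ s) \<longleftrightarrow> odd (n div 2 ^ s)"
proof (induction s arbitrary: n)
  case (Suc s)
  have "odd (n choose 2 ^ Suc s) \<longleftrightarrow> odd ((n div 2) choose 2 ^ s)"
    using odd_choose_iff[of n "2 ^ Suc s"] by simp
  also have "\<dots> \<longleftrightarrow> odd (n div 2 ^ Suc s)"
    by (simp add: Suc.IH div_mult2_eq)
  finally show ?case .
qed simp

lemma odd_choose_div_power_of_two:
  "odd (n choose r) \<Longrightarrow> odd ((n div 2 ^ s) choose (r div 2 ^ s))"
proof (induction s)
  case (Suc s)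
  then have "odd ((n div 2 ^ s div 2) choose (r div 2 ^ s div 2))"
    using odd_choose_iff by blast
  moreover have "m div 2 ^ Suc s = m div 2 ^ s div 2" for m :: nat
    by (metis div_mult2_eq power_Suc2)
  ultimately show ?case by simp
qed simp

lemma central_binomial_eq_double:
  assumes "1 \<le> j"
  shows "(2 * j) choose j = 2 * ((2 * j - 1) choose (j - 1))"
proof -
  obtain t where t: "j = Suc t" using assms by (cases j) auto
  have "(2 * t + 1) choose (t + 1) = (2 * t + 1) choose t"
    using binomial_symmetric[of t "2 * t + 1"] by (simp add: Suc_diff_le)
  then show ?thesis using t by simp
qed

lemma power_of_two_if_odd_half_central_binomial:
  "1 \<le> j \<Longrightarrow> odd ((2 * j - 1) choose (j - 1)) \<Longrightarrow> \<exists>r. j = 2 ^ r"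
proof (induction j rule: less_induct)
  case (less j)
  consider "j = 1" | j' where "j = 2 * j'" "1 \<le> j'" | s where "j = Suc (2 * s)" "1 \<le> s"
  proof (cases "even j")
    case True
    then obtain j' where "j = 2 * j'" ..
    then show ?thesis using that less.prems(1) by simp
  next
    case False
    then obtain s where "j = Suc (2 * s)" using oddE by fastforce
    then show ?thesis using that(1) that(3)[of s] by (cases s) auto
  qed
  then show ?case
  proof cases
    case 1
    then show ?thesis by (metis power_0)
  next
    case 2
    then have "2 * j - 1 = Suc (2 * (2 * j' - 1))" "j - 1 = Suc (2 * (j' - 1))" by auto
    then have "odd ((2 * j' - 1) choose (j' - 1))"
      using odd_choose_iff[of "2 * j - 1" "j - 1"] less.prems(2) by simp
    then obtain r where "j' = 2 ^ r" using less.IH[of j'] 2 by auto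
    then show ?thesis using 2 by (metis power_Suc)
  next
    case 3
    then have "2 * j - 1 = Suc (2 * (2 * s))" "j - 1 = 2 * s" by auto
    then have "odd ((2 * s) choose s)"
      using odd_choose_iff[of "2 * j - 1" "j - 1"] less.prems(2) by simp
    with central_binomial_eq_double[OF \<open>1 \<le> s\<close>] show ?thesis by simp
  qed
qed

lemma even_div_power_of_two_if_odd_choose:
  assumes j: "j = 2 ^ r" and odd_k: "odd (k choose i)" and odd_kj: "odd ((k - j) choose i)"
  shows "even (i div j)"
proof (rule ccontr)
  assume odd_ij: "odd (i div j)"
  have "odd ((k div j) choose (i div j))" "odd (((k - j) div j) choose (i div j))"
    using odd_choose_div_power_of_two[OF odd_k, of r] odd_choose_div_power_of_two[OF odd_kj, of r] j
    by simp_all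
  then have odd_kdiv: "odd (k div j)" and "odd ((k - j) div j)"
    using odd_ij odd_if_odd_choose by blast+
  moreover have "j \<le> k"
  proof (rule ccontr)
    assume "\<not> j \<le> k"
    then have "k div j = 0" by simp
    with odd_kdiv show False by simp
  qed
  then have "k div j = Suc ((k - j) div j)"
    using j by (simp add: le_div_geq)
  ultimately show False by simp
qed

lemma div_double_add_eq:
  fixes i j c :: nat
  assumes "even i" "even j" "even (i div j)" "0 < j" "c \<le> j + 1"
  shows "(i + c) div (2 * j) = i div (2 * j)"
proof -
  have "i mod j < j" "even (i mod j)"
    using assms by (simp_all add: dvd_mod)
  then have "i mod j + 2 \<le> j"
    using assms(2) by (auto elim!: evenE)
  moreover have "i mod (2 * j) = i mod j"
    using assms(3) mod_mult2_eq[of i j 2] by (simp add: mult.commute)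
  ultimately have "i mod (2 * j) + c < 2 * j"
    using assms(5) by simp
  moreover have "i + c = (i mod (2 * j) + c) + i div (2 * j) * (2 * j)"
    using mod_div_mult_eq[of i "2 * j"] by linarith
  ultimately show ?thesis
    using assms(4) by (simp only: div_mult_self1) simp
qed

lemma four_dvd_central_binomial_term:
  fixes i j k :: nat
  assumes j: "2 \<le> j" and even_i: "even i" and odd_k: "odd (k choose i)"
  shows "(4::int) dvd int ((2 * j) choose j) * int ((k - j) choose i)
           * (int ((i + j + 1) choose (2 * j)) - int ((i + j - 1) choose (2 * j)))"
proof -
  define c where "c = (2 * j - 1) choose (j - 1)"
  have central: "(2 * j) choose j = 2 * c"
    using central_binomial_eq_double j c_def by simp
  consider "even c" | "even ((k - j) choose i)" | "odd c" "odd ((k - j) choose i)"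
    by blast
  then show ?thesis
  proof cases
    case 1
    then show ?thesis using central by (auto elim!: evenE)
  next
    case 2
    then show ?thesis using central by (auto elim!: evenE)
  next
    case 3
    have "\<exists>r. j = 2 ^ r"
      using power_of_two_if_odd_half_central_binomial[of j] 3(1) j c_def by simp
    then obtain r where r: "j = 2 ^ r" ..
    with j have "2 * j = 2 ^ Suc r" "even j"
      by (cases r; simp)+
    have "even (i div j)"
      using even_div_power_of_two_if_odd_choose[OF r odd_k] 3(2) .
    then have "(i + (j + 1)) div (2 * j) = i div (2 * j)" "(i + (j - 1)) div (2 * j) = i div (2 * j)"
      using div_double_add_eq[OF even_i \<open>even j\<close>, of "j + 1"] div_double_add_eq[OF even_i \<open>even j\<close>, of "j - 1"] j
      by simp_all
    moreover have "i + (j + 1) = i + j + 1" "i + (j - 1) = i + j - 1"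
      using j by simp_all
    ultimately have "odd ((i + j + 1) choose (2 * j)) \<longleftrightarrow> odd ((i + j - 1) choose (2 * j))"
      using odd_choose_power_of_two_iff \<open>2 * j = 2 ^ Suc r\<close> by metis
    then have "even (int ((i + j + 1) choose (2 * j)) - int ((i + j - 1) choose (2 * j)))"
      by simp
    then obtain e where "int ((i + j + 1) choose (2 * j)) - int ((i + j - 1) choose (2 * j)) = 2 * e" ..
    then show ?thesis using central by (simp add: mult_ac)
  qed
qed

subsection \<open>The eigenvalues of J(2k, k, i)\<close>

lemma binomz_of_nat [simp]: "binomz (int x) (int l) = int (x choose l)"
  by (auto simp: binomz_def binomial_eq_0)

lemma binomz_complement:
  assumes "x \<le> k" "i \<le> k" "l \<le> k - i"
  shows "binomz (int k - int x) (int i - int x + int l) = int ((k - x) choose (k - i - l))"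
proof (cases "x \<le> i + l")
  case True
  moreover have "int k - int x = int (k - x)" "int i - int x + int l = int (i + l - x)"
    using assms(1) True by simp_all
  ultimately have "binomz (int k - int x) (int i - int x + int l) = int ((k - x) choose (i + l - x))"
    by (simp only: binomz_of_nat)
  also have "\<dots> = int ((k - x) choose (k - i - l))"
    using binomial_symmetric[of "i + l - x" "k - x"] assms True by (simp add: diff_diff_eq)
  finally show ?thesis .
next
  case False
  then show ?thesis
    using assms by (auto simp: binomz_def binomial_eq_0)
qed

lemma jlambda_eq_central_sum:
  assumes "x \<le> k" "i \<le> k"
  shows "jlambda k i x = (-1)^(k - i) * (\<Sum>j\<le>k - i. (-1)^j * int ((k - j) choose i)
           * int ((2 * j) choose j) * int ((k - x + j) choose (2 * j)))"
proof -
  have "jlambda k i x = (\<Sum>l\<le>k - i. (-1)^l * int (x choose l) * int ((k - x) choose (k - i - l))^2)"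
    unfolding jlambda_def atLeast0AtMost
    by (rule sum.cong[OF refl]) (simp add: binomz_complement assms)
  also have "\<dots> = (-1)^(k - i) * (\<Sum>j\<le>k - i. (-1)^j * int ((k - x + x - j) choose (k - i - j))
           * int ((k - x) choose j) * int ((k - x + j) choose j))"
    using alternating_sum_choose_square[where d="k - i" and x=x and a="k - x"] by (simp add: diff_diff_add)
  also have "\<dots> = (-1)^(k - i) * (\<Sum>j\<le>k - i. (-1)^j * int ((k - j) choose i)
           * int ((2 * j) choose j) * int ((k - x + j) choose (2 * j)))"
  proof -
    have "(-1)^j * int ((k - x + x - j) choose (k - i - j)) * int ((k - x) choose j) * int ((k - x + j) choose j)
        = (-1)^j * int ((k - j) choose i) * int ((2 * j) choose j) * int ((k - x + j) choose (2 * j))"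
      if "j \<le> k - i" for j
    proof -
      have "(k - j) choose (k - i - j) = (k - j) choose i"
        using binomial_symmetric[of i "k - j"] that assms(2) by (simp add: add.commute)
      moreover have "int ((k - x) choose j) * int ((k - x + j) choose j)
          = int ((2 * j) choose j) * int ((k - x + j) choose (2 * j))"
        using choose_mult_central[of "k - x" j] by (simp flip: of_nat_mult)
      ultimately show ?thesis
        using assms(1) by (simp add: mult.assoc)
    qed
    then show ?thesis
      by (intro arg_cong[where f="\<lambda>s. (-1)^(k - i) * s"] sum.cong) simp_all
  qed
  finally show ?thesis .
qed

lemma jlambda_diff_eq:
  assumes "1 \<le> i" "i < k"
  shows "jlambda k i (k - i - 1) - jlambda k i (k - i + 1)
    = (-1)^(k - i) * (\<Sum>j\<le>k - i. (-1)^j * int ((2 * j) choose j) * int ((k - j) choose i)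
          * (int ((i + j + 1) choose (2 * j)) - int ((i + j - 1) choose (2 * j))))"
proof -
  have "k - (k - i - 1) = i + 1" "k - (k - i + 1) = i - 1" "i - 1 + j = i + j - 1" for j
    using assms by simp_all
  then have "jlambda k i (k - i - 1) - jlambda k i (k - i + 1)
    = (-1)^(k - i) * ((\<Sum>j\<le>k - i. (-1)^j * int ((k - j) choose i) * int ((2 * j) choose j)
                         * int ((i + 1 + j) choose (2 * j)))
                    - (\<Sum>j\<le>k - i. (-1)^j * int ((k - j) choose i) * int ((2 * j) choose j)
                         * int ((i + j - 1) choose (2 * j))))"
    using jlambda_eq_central_sum[of "k - i - 1" k i] jlambda_eq_central_sum[of "k - i + 1" k i] assms
    by (simp only: right_diff_distrib)
  also have "\<dots> = (-1)^(k - i) * (\<Sum>j\<le>k - i. (-1)^j * int ((2 * j) choose j) * int ((k - j) choose i)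
          * (int ((i + j + 1) choose (2 * j)) - int ((i + j - 1) choose (2 * j))))"
    by (simp only: sum_subtractf[symmetric]) (simp add: algebra_simps)
  finally show ?thesis .
qed

lemma central_sum_mod_four:
  assumes "1 \<le> m" "even i" "odd (k choose i)" "odd ((k - 1) choose i)"
  shows "(\<Sum>j\<le>m. (-1)^j * int ((2 * j) choose j) * int ((k - j) choose i)
          * (int ((i + j + 1) choose (2 * j)) - int ((i + j - 1) choose (2 * j)))) mod 4 = 2"
proof -
  define T where "T j = (-1)^j * int ((2 * j) choose j) * int ((k - j) choose i)
          * (int ((i + j + 1) choose (2 * j)) - int ((i + j - 1) choose (2 * j)))" for j
  obtain m' where m: "m = Suc m'"
    using assms(1) by (cases m) auto
  have "(\<Sum>j\<le>m. T j) = T 0 + T 1 + (\<Sum>j<m'. T (Suc (Suc j)))"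
    unfolding m sum.atMost_shift sum.lessThan_Suc_shift by simp
  moreover have "T 0 = 0"
    by (simp add: T_def)
  moreover have "(i + 2) choose 2 = (i choose 2) + 2 * i + 1"
    by (simp add: numeral_2_eq_2)
  then have "T 1 = - 2 * (int ((k - 1) choose i) * (2 * int i + 1))"
    by (simp add: T_def algebra_simps)
  moreover have "(4::int) dvd (\<Sum>j<m'. T (Suc (Suc j)))"
  proof (rule dvd_sum)
    fix j
    show "(4::int) dvd T (Suc (Suc j))"
      using four_dvd_central_binomial_term[of "Suc (Suc j)" i k] assms(2,3)
      by (simp add: T_def mult.assoc)
  qed
  then obtain r where "(\<Sum>j<m'. T (Suc (Suc j))) = 4 * r" ..
  moreover have "odd (int ((k - 1) choose i) * (2 * int i + 1))"
    using assms(4) by simp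
  then obtain c where "int ((k - 1) choose i) * (2 * int i + 1) = 2 * c + 1" ..
  ultimately have "(\<Sum>j\<le>m. T j) = 2 + 4 * (r - c - 1)"
    by simp
  then have "(\<Sum>j\<le>m. T j) mod 4 = 2"
    by (simp only: mod_mult_self2) simp
  then show ?thesis
    unfolding T_def .
qed

theorem mainTheorem13:
  fixes k i :: nat
  assumes "k \<ge> 3" and "odd k" and "1 \<le> i" and "i \<le> k - 1"
    and "odd (k choose i)" and "odd ((k - 1) choose i)"
  shows "(jlambda k i (k - i + 1) - jlambda k i (k - i - 1)) mod 4 = 2"
proof -
  have "even i"
    using odd_if_odd_choose[OF assms(6)] assms(1,2) by auto
  have "i < k" "odd (k - i)"
    using assms(1,2,4) \<open>even i\<close> by simp_all
  have "jlambda k i (k - i + 1) - jlambda k i (k - i - 1)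
      = - (jlambda k i (k - i - 1) - jlambda k i (k - i + 1))"
    by simp
  also have "\<dots> = (\<Sum>j\<le>k - i. (-1)^j * int ((2 * j) choose j) * int ((k - j) choose i)
          * (int ((i + j + 1) choose (2 * j)) - int ((i + j - 1) choose (2 * j))))"
    unfolding jlambda_diff_eq[OF assms(3) \<open>i < k\<close>] using \<open>odd (k - i)\<close> by simp
  finally show ?thesis
    using central_sum_mod_four[of "k - i" i k] \<open>even i\<close> \<open>i < k\<close> assms(5,6) by simp
qed

end
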